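(* Let $\mathbf U$ be a real $3\times3$ positive-definite symmetric matrix and $\hat{\mathbf e}$ a unit vector such that $\hat{\mathbf U}:=(-\mathbf I+2\hat{\mathbf e}\otimes\hat{\mathbf e})\mathbf U(-\mathbf I+2\hat{\mathbf e}\otimes\hat{\mathbf e})\neq\mathbf U$ and $\hat{\mathbf e}$ is, up to sign, the only unit vector with $\hat{\mathbf U}=(-\mathbf I+2\hat{\mathbf e}\otimes\hat{\mathbf e})\mathbf U(-\mathbf I+2\hat{\mathbf e}\otimes\hat{\mathbf e})$. Let $$\mathbf n_I=\hat{\mathbf e},\qquad \mathbf a_I=2\Big(\frac{\mathbf U^{-1}\hat{\mathbf e}}{|\mathbf U^{-1}\hat{\mathbf e}|^2}-\mathbf U\hat{\mathbf e}\Big),$$ and let $\hat{\mathbf R}\in\mathrm{SO}(3)$ satisfy $\hat{\mathbf R}\hat{\mathbf U}=\mathbf U+\mathbf a_I\otimes\mathbf n_I$, with $\mathbf a_I\ne0$. Suppose the cofactor conditions hold with $\mathbf a=\mathbf a_I$, $\mathbf n=\mathbf n_I$: (CC1) the middle eigenvalue of $\mathbf U$ is $1$; (CC2) $\mathbf a_I\cdot\mathbf U\,\mathrm{cof}(\mathbf U^2-\mathbf I)\mathbf n_I=0$; (CC3) $\mathrm{tr}\,\mathbf U^2-\det\mathbf U^2-\frac{|\mathbf a_I|^2|\mathbf n_I|^2}{4}-2\ge0$. For $f\in\{0,1\}$ let $(\mathbf R_f^\kappa,\mathbf b_f^\kappa\otimes\mathbf m_f^\kappa)$, $\kappa\in\{\pm1\}$,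 be the two distinct solutions $\mathbf R\in\mathrm{SO}(3)$, $\mathbf b,\mathbf m\in\mathbb R^3$ of $\mathbf R(\mathbf U+f\,\mathbf a_I\otimes\mathbf n_I)=\mathbf I+\mathbf b\otimes\mathbf m$. Then there are $\sigma,\sigma_*\in\{\pm1\}$ such that $\mathbf R_1^{\sigma_*}=\mathbf R_0^\sigma$ and $\mathbf b_1^{\sigma_*}=\xi\,\mathbf b_0^\sigma$ for some $\xi\ne0$, so that $$\mathbf R_0^\sigma\mathbf U=\mathbf I+\mathbf b_0^\sigma\otimes\mathbf m_0^\sigma,\qquad \mathbf R_0^\sigma(\mathbf U+\mathbf a_I\otimes\mathbf n_I)=\mathbf I+\mathbf b_0^\sigma\otimes\xi\mathbf m_1^{\sigma_*},$$ and consequently, for all $0\le f\le1$, $$\mathbf R_0^\sigma[\mathbf U+f\,\mathbf a_I\otimes\mathbf n_I]=\mathbf I+\mathbf b_0^\sigma\otimes\big(f\xi\mathbf m_1^{\sigma_*}+(1-f)\mathbf m_0^\sigma\big).$$ The three matrices $\mathbf I$, $\mathbf R_0^\sigma\mathbf U$, $\mathbf R_0^\sigma\hat{\mathbf R}\hat{\mathbf U}$ are pairwise rank-one connected: $$\mathbf R_0^\sigma\mathbf U-\mathbf I=\mathbf b_0^\sigma\otimes\mathbf m_0^\sigma,\quad \mathbf R_0^\sigma\hat{\mathbf R}\hat{\mathbf U}-\mathbf I=\mathbf b_0^\sigma\otimes\xi\mathbf m_1^{\sigma_*},\quad \mathbf R_0^\sigma\hat{\mathbf R}\hat{\mathbf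 U}-\mathbf R_0^\sigma\mathbf U=\mathbf R_0^\sigma\mathbf a_I\otimes\mathbf n_I.$$ Finally, there is a constant $c\ne0$ such that $c\,\mathbf n_I=\xi\mathbf m_1^{\sigma_*}-\mathbf m_0^\sigma$; in particular $\mathbf m_0^\sigma,\mathbf m_1^{\sigma_*},\mathbf n_I$ lie in a plane.
   Context: $\mathbf a\otimes\mathbf n$ is the matrix $\mathbf x\mapsto(\mathbf n\cdot\mathbf x)\mathbf a$; $\mathrm{cof}\,\mathbf A$ is the cofactor matrix of $\mathbf A$. Under the stated hypotheses, for $f\in\{0,1\}$ the equation $\mathbf R(\mathbf U+f\,\mathbf a_I\otimes\mathbf n_I)=\mathbf I+\mathbf b\otimes\mathbf m$ has exactly two distinct solutions $(\mathbf R,\mathbf b\otimes\mathbf m)$, labeled by $\kappa=\pm1$ (solutions distinguished by the pair $(\mathbf R,\mathbf b\otimes\mathbf m)$). *)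

theory Defs
  imports "HOL-Analysis.Analysis"
begin

type_synonym vec3 = "real ^ 3"
type_synonym mat3 = "real ^ 3 ^ 3"

definition outer :: "real ^ 'n \<Rightarrow> real ^ 'n \<Rightarrow> real ^ 'n ^ 'n" where
  "outer a n = (\<chi> i j. a $ i * n $ j)"

text \<open>Cofactor matrix: entry (i,j) is the determinant of A with row i replaced by
  the j-th standard basis row, i.e. (-1)^(i+j) times the (i,j) minor.\<close>
definition cof :: "real ^ 'n ^ 'n \<Rightarrow> real ^ 'n ^ 'n" where
  "cof A = (\<chi> i j. det (\<chi> k l. if k = i then (if l = j then 1 else 0) else A $ k $ l))"

definition sym_pos_def :: "real ^ 'n ^ 'n \<Rightarrow> bool" where
  "sym_pos_def U \<longleftrightarrow> transpose U = U \<and> (\<forall>x. x \<noteq> 0 \<longrightarrow> x \<bullet> (U *v x) > 0)"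

definition middle_eigenvalue :: "mat3 \<Rightarrow> real \<Rightarrow> bool" where
  "middle_eigenvalue U l2 \<longleftrightarrow>
     (\<exists>l1 l3. l1 \<le> l2 \<and> l2 \<le> l3 \<and>
        (\<forall>t. det (U - t *\<^sub>R mat 1) = (l1 - t) * (l2 - t) * (l3 - t)))"

definition refl_mat :: "vec3 \<Rightarrow> mat3" where
  "refl_mat e = - mat 1 + 2 *\<^sub>R outer e e"

end

theory Submission
  imports Defs
begin

text \<open>
  By (CC1), \<open>1\<close> is an eigenvalue of \<open>U\<close>. Since \<open>U\<close> is positive definite, its fixed vectors
  are the kernel of \<open>U\<^sup>2 - I\<close>, which contains the columns of \<open>cof (U\<^sup>2 - I)\<close>. Uniqueness of
  the twin axis \<open>e\<close> rules out fixed vectors orthogonal to \<open>e\<close>, so \<open>x = cof (U\<^sup>2 - I) e\<close> is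
  a fixed vector with \<open>x \<bullet> e \<noteq> 0\<close>, and (CC2) reduces to \<open>|U\<^sup>-\<^sup>1 e| = 1\<close>, i.e.
  \<open>a\<^sub>I = 2 (U\<^sup>-\<^sup>1 e - U e)\<close>. A rotation \<open>Q\<close> (a product of two reflections) with
  \<open>Q U\<^sup>-\<^sup>1 e = e\<close> and \<open>Q x = x\<close> makes \<open>Q U - I\<close> rank-one, \<open>Q U = I + b \<otimes> m\<close>, and
  then \<open>Q a\<^sub>I = -2 (m \<bullet> e) b\<close>. Hence \<open>Q (U + f a\<^sub>I \<otimes> n\<^sub>I) = I + b \<otimes> (m - 2 f (m \<bullet> e) e)\<close>
  for every \<open>f\<close>, and uniqueness of the solutions identifies \<open>Q\<close> with both \<open>R 0 \<sigma>\<close> and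
  \<open>R 1 \<sigma>s\<close>.
\<close>

section \<open>Outer products and rank-one matrices\<close>

lemma outer_mult_vec: "outer a n *v x = (n \<bullet> x) *\<^sub>R a"
  by (simp add: vec_eq_iff outer_def matrix_vector_mult_def inner_vec_def sum_distrib_left mult_ac)

lemma matrix_mul_outer: "A ** outer a n = outer (A *v a) n"
  by (simp add: vec_eq_iff outer_def matrix_matrix_mult_def matrix_vector_mult_def sum_distrib_right mult.assoc)

lemma transpose_outer: "transpose (outer a n) = outer n a"
  by (simp add: vec_eq_iff outer_def transpose_def)

lemma transpose_add: "transpose (A + B) = transpose A + transpose B"
  by (simp add: vec_eq_iff transpose_def)

lemma transpose_diff: "transpose (A - B) = transpose A - transpose B"
  by (simp add: vec_eq_iff transpose_def)

lemma outer_eq_0_iff: "outer a n = 0 \<longleftrightarrow> a = 0 \<or> n = 0"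
  by (auto simp: outer_def vec_eq_iff)

lemma outer_add_right: "outer a (m + n) = outer a m + outer a n"
  by (simp add: vec_eq_iff outer_def distrib_left)

lemma outer_scaleR_left: "outer (c *\<^sub>R a) n = outer a (c *\<^sub>R n)"
  by (simp add: vec_eq_iff outer_def)

lemma outer_scaleR_right: "outer a (c *\<^sub>R n) = c *\<^sub>R outer a n"
  by (simp add: vec_eq_iff outer_def mult.left_commute)

lemma matrix_mul_scaleR_right: "A ** (c *\<^sub>R B) = c *\<^sub>R (A ** B)" for A B :: "real^'n^'n"
  by (simp add: vec_eq_iff matrix_matrix_mult_def sum_distrib_left mult.left_commute)

lemma outer_eq_outerE:
  fixes a b m n :: "real^'n"
  assumes eq: "outer a m = outer b n" and "b \<noteq> 0" "n \<noteq> 0"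
  obtains \<xi> where "\<xi> \<noteq> 0" "a = \<xi> *\<^sub>R b" "n = \<xi> *\<^sub>R m"
proof -
  obtain i where i: "b $ i \<noteq> 0" using \<open>b \<noteq> 0\<close> by (auto simp: vec_eq_iff)
  obtain j where j: "n $ j \<noteq> 0" using \<open>n \<noteq> 0\<close> by (auto simp: vec_eq_iff)
  have entries: "a $ k * m $ l = b $ k * n $ l" for k l
    using eq by (simp add: outer_def vec_eq_iff)
  have mj: "m $ j \<noteq> 0" using entries[of i j] i j by auto
  define \<xi> where "\<xi> = n $ j / m $ j"
  have a: "a = \<xi> *\<^sub>R b"
    unfolding vec_eq_iff \<xi>_def using entries mj by (auto simp: field_simps)
  have "n = \<xi> *\<^sub>R m"
    unfolding vec_eq_iff using entries[of i] i by (auto simp: a field_simps)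
  moreover have "\<xi> \<noteq> 0" using j mj by (simp add: \<xi>_def)
  ultimately show thesis using that a by blast
qed

lemma det_mat1_add_outer: "det (mat 1 + outer a b) = 1 + a \<bullet> b" for a b :: "real^3"
  by (simp add: det_3 vec_eq_iff outer_def mat_def inner_vec_def sum_3 algebra_simps)

lemma rank_one_segment:
  assumes "Q ** U = mat 1 + outer b m" "Q *v a = c *\<^sub>R b"
  shows "Q ** (U + f *\<^sub>R outer a n) = mat 1 + outer b (m + (f * c) *\<^sub>R n)"
  using assms by (simp add: matrix_add_ldistrib matrix_mul_scaleR_right matrix_mul_outer outer_add_right
      outer_scaleR_left outer_scaleR_right)

section \<open>Cross products and cofactors in dimension three\<close>

lemma orthogonal_to_pair_exists:
  fixes a b :: "'a::euclidean_space"
  assumes "3 \<le> DIM('a)"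
  obtains p where "p \<noteq> 0" "p \<bullet> a = 0" "p \<bullet> b = 0"
proof -
  have "dim {a, b} \<le> card {a, b}"
    by (rule dim_le_card') simp
  also have "\<dots> < DIM('a)"
    using assms by (cases "a = b") auto
  finally obtain p where "p \<noteq> 0" "\<And>y. y \<in> span {a, b} \<Longrightarrow> orthogonal p y"
    using orthogonal_to_subspace_exists by blast
  with that show thesis
    by (simp add: orthogonal_def span_base)
qed

lemma orthogonal_to_combination_exists:
  fixes a b n :: "real^3"
  assumes "\<xi> \<noteq> 0" "k *\<^sub>R n = \<xi> *\<^sub>R b - a"
  obtains p where "p \<noteq> 0" "p \<bullet> a = 0" "p \<bullet> b = 0" "p \<bullet> n = 0"
proof -
  obtain p :: "real^3" where p: "p \<noteq> 0" "p \<bullet> a = 0" "p \<bullet> n = 0"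
    using orthogonal_to_pair_exists[of a n] by auto
  then have "\<xi> * (p \<bullet> b) = 0"
    using arg_cong[OF assms(2), of "inner p"] by (simp add: inner_diff_right)
  with p assms(1) that show thesis by simp
qed

lemma cross3_eq_0_inner_eq_0:
  fixes a b p :: "real^3"
  assumes "cross3 a b = 0" "a \<bullet> p = 0" "a \<noteq> 0"
  shows "b \<bullet> p = 0"
proof -
  have "(a \<bullet> a) * (b \<bullet> p) = 0"
    using assms(1,2) by (simp add: vec_eq_iff forall_3 cross_components inner_vec_def sum_3) algebra
  then show ?thesis using assms(3) by simp
qed

lemma cross3_eq_0_scaleR:
  fixes x e :: "real^3"
  assumes "cross3 x e = 0" "x \<noteq> 0"
  shows "e = ((x \<bullet> e) / (x \<bullet> x)) *\<^sub>R x"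
proof -
  have h: "(x \<bullet> x) *\<^sub>R e = (x \<bullet> e) *\<^sub>R x"
    using assms(1) by (simp add: vec_eq_iff forall_3 cross_components inner_vec_def sum_3) algebra
  have "e = (1 / (x \<bullet> x)) *\<^sub>R ((x \<bullet> x) *\<^sub>R e)"
    using assms(2) by simp
  also have "\<dots> = ((x \<bullet> e) / (x \<bullet> x)) *\<^sub>R x"
    unfolding h by simp
  finally show ?thesis .
qed

lemma matrix_eq_outer_cross3:
  fixes M :: "real^3^3" and p q :: "real^3"
  assumes "M *v p = 0" "M *v q = 0" "cross3 p q \<noteq> 0"
  shows "M = outer ((1 / (cross3 p q \<bullet> cross3 p q)) *\<^sub>R (M *v cross3 p q)) (cross3 p q)"
proof (rule matrix_eq[THEN iffD2], intro allI)
  fix x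
  let ?n = "cross3 p q"
  have row: "(?n \<bullet> ?n) * (r \<bullet> x) = (?n \<bullet> x) * (r \<bullet> ?n)" if "r \<bullet> p = 0" "r \<bullet> q = 0" for r
    using that by (simp add: inner_vec_def sum_3 cross_components) algebra
  have "M $ i \<bullet> p = 0" "M $ i \<bullet> q = 0" for i
    using assms(1,2) by (simp_all add: vec_eq_iff matrix_vector_mult_def inner_vec_def)
  then have "(?n \<bullet> ?n) * (M $ i \<bullet> x) = (?n \<bullet> x) * (M $ i \<bullet> ?n)" for i
    using row by blast
  then show "M *v x = outer ((1 / (?n \<bullet> ?n)) *\<^sub>R (M *v ?n)) ?n *v x"
    using assms(3) by (simp add: vec_eq_iff outer_mult_vec matrix_vector_mul_component field_simps)
qed

lemma matrix_mul_transpose_cof: "A ** transpose (cof A) = det A *\<^sub>R mat 1" for A :: "real^3^3"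
  unfolding cof_def by (simp add: det_3 vec_eq_iff forall_3 sum_3 matrix_matrix_mult_def mat_def transpose_def algebra_simps)

lemma cof_transpose: "cof (transpose A) = transpose (cof A)" for A :: "real^3^3"
  unfolding cof_def by (simp add: det_3 vec_eq_iff forall_3 transpose_def algebra_simps)

lemma cof_eq_0_cross3_rows: "cof A = 0 \<Longrightarrow> cross3 (A $ i) (A $ j) = 0" for A :: "real^3^3"
  using exhaust_3[of i] exhaust_3[of j]
  unfolding cof_def by (auto simp: det_3 vec_eq_iff forall_3 cross_components algebra_simps)

lemma cof_eq_0_kernel_orthogonal:
  fixes A :: "real^3^3" and e :: "real^3"
  assumes "cof A = 0"
  obtains p where "p \<noteq> 0" "A *v p = 0" "p \<bullet> e = 0"
proof (cases "A = 0")
  case True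
  obtain p :: "real^3" where "p \<noteq> 0" "p \<bullet> e = 0" using orthogonal_to_pair_exists[of e e] by auto
  with True that show thesis by simp
next
  case False
  then obtain i where i: "A $ i \<noteq> 0" by (auto simp: vec_eq_iff)
  obtain p where p: "p \<noteq> 0" "p \<bullet> A $ i = 0" "p \<bullet> e = 0"
    using orthogonal_to_pair_exists[of "A $ i" e] by auto
  have "A $ j \<bullet> p = 0" for j
    using cross3_eq_0_inner_eq_0[OF cof_eq_0_cross3_rows[OF assms] _ i] p(2) by (simp add: inner_commute)
  then have "A *v p = 0" by (simp add: vec_eq_iff matrix_vector_mult_def inner_vec_def)
  with p that show thesis by simp
qed

section \<open>Reflections and rotations\<close>

definition householder :: "real^'n \<Rightarrow> real^'n^'n" where
  "householder d = mat 1 - (2 / (d \<bullet> d)) *\<^sub>R outer d d"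

lemma householder_mult_vec: "householder d *v x = x - ((2 / (d \<bullet> d)) * (d \<bullet> x)) *\<^sub>R d"
  by (simp add: householder_def matrix_vector_mult_diff_rdistrib outer_mult_vec
      scaleR_matrix_vector_assoc[symmetric])

lemma householder_involutive: "householder d *v (householder d *v x) = x"
proof (cases "d = 0")
  case False
  let ?y = "householder d *v x"
  have "d \<bullet> ?y = - (d \<bullet> x)"
    using False by (simp add: householder_mult_vec inner_diff_right)
  then have "householder d *v ?y = ?y + ((2 / (d \<bullet> d)) * (d \<bullet> x)) *\<^sub>R d"
    by (simp add: householder_mult_vec[of d ?y])
  then show ?thesis
    by (simp add: householder_mult_vec[of d x])
qed (simp add: householder_def)

lemma orthogonal_matrix_householder: "orthogonal_matrix (householder d)"
proof -
  have "transpose (householder d) = householder d"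
    by (simp add: householder_def vec_eq_iff transpose_def mat_def outer_def mult.commute)
  moreover have "householder d ** householder d = mat 1"
    by (simp add: matrix_eq matrix_vector_mul_assoc[symmetric] householder_involutive)
  ultimately show ?thesis by (simp add: orthogonal_matrix)
qed

lemma det_householder:
  fixes d :: "real^3"
  assumes "d \<noteq> 0"
  shows "det (householder d) = -1"
proof -
  have "householder d = mat 1 + outer (- (2 / (d \<bullet> d)) *\<^sub>R d) d"
    by (simp add: householder_def vec_eq_iff outer_def mat_def)
  then show ?thesis using assms by (simp add: det_mat1_add_outer)
qed

text \<open>Two reflections: the first moves \<open>u\<close> to \<open>e\<close> and fixes \<open>x\<close>,
  the second fixes both and restores the orientation.\<close>
lemma exists_rotation_map_fix:
  fixes u e x :: "real^3"
  assumes "u \<bullet> u = e \<bullet> e" "u \<bullet> x = e \<bullet> x"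
  obtains Q where "rotation_matrix Q" "Q *v u = e" "Q *v x = x"
proof (cases "u = e")
  case True
  with that[of "mat 1"] show thesis by (simp add: rotation_matrix_def orthogonal_matrix_id)
next
  case False
  define d where "d = u - e"
  obtain n :: "real^3" where n: "n \<noteq> 0" "n \<bullet> e = 0" "n \<bullet> x = 0"
    using orthogonal_to_pair_exists[of e x] by auto
  have d: "d \<noteq> 0" "d \<bullet> x = 0" "d \<bullet> d = 2 * (d \<bullet> u)"
    using False assms by (auto simp: d_def inner_diff_left inner_diff_right inner_commute)
  then have "d \<bullet> u \<noteq> 0" by auto
  with d have "householder d *v u = e"
    by (simp add: householder_mult_vec d_def)
  moreover have "householder d *v x = x" "householder n *v e = e" "householder n *v x = x"
    using d n by (simp_all add: householder_mult_vec)
  moreover have "rotation_matrix (householder n ** householder d)"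
    using d n by (simp add: rotation_matrix_def orthogonal_matrix_mul orthogonal_matrix_householder
        det_mul det_householder)
  ultimately show thesis
    using that by (simp add: matrix_vector_mul_assoc[symmetric])
qed

text \<open>\<open>(Q U)\<^sup>T - I\<close> annihilates both \<open>x\<close> and \<open>e\<close>, hence has rank one.\<close>
lemma exists_rotation_rank_one:
  fixes U :: mat3 and u e x :: vec3
  assumes Usym: "transpose U = U" and "U *v u = e" "u \<bullet> u = e \<bullet> e"
    and "U *v x = x" "cross3 x e \<noteq> 0"
  obtains Q b m where "rotation_matrix Q" "Q *v u = e" "Q ** U = mat 1 + outer b m"
proof -
  have "u \<bullet> x = e \<bullet> x"
    using assms(2,4) Usym by (metis dot_lmul_matrix inner_commute transpose_matrix_vector)
  then obtain Q where Q: "rotation_matrix Q" "Q *v u = e" "Q *v x = x"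
    using exists_rotation_map_fix assms(3) by blast
  have QtQ: "transpose Q ** Q = mat 1"
    using Q(1) by (simp add: rotation_matrix_def orthogonal_matrix_def)
  have "transpose Q *v e = u" "transpose Q *v x = x"
    using Q(2,3) QtQ by (metis matrix_vector_mul_assoc matrix_vector_mul_lid)+
  define M where "M = transpose (Q ** U) - mat 1"
  have "M *v x = 0" "M *v e = 0"
    using assms(2,4) \<open>transpose Q *v e = u\<close> \<open>transpose Q *v x = x\<close>
    by (simp_all add: M_def matrix_transpose_mul Usym matrix_vector_mult_diff_rdistrib
        matrix_vector_mul_assoc[symmetric])
  then obtain y where "M = outer y (cross3 x e)"
    using matrix_eq_outer_cross3 assms(5) by blast
  then have "Q ** U = mat 1 + outer (cross3 x e) y"
    by (metis M_def diff_add_cancel transpose_add transpose_mat transpose_outer transpose_transpose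
        add.commute)
  with Q show thesis using that by blast
qed

lemma refl_mat_mult_vec: "refl_mat w *v x = (2 * (w \<bullet> x)) *\<^sub>R w - x"
  unfolding refl_mat_def
  by (simp add: vec_eq_iff forall_3 sum_3 matrix_vector_mult_def outer_def mat_def inner_vec_def
      algebra_simps)

lemma refl_mat_squared:
  assumes "norm w = 1"
  shows "refl_mat w ** refl_mat w = mat 1"
proof -
  have "w \<bullet> (refl_mat w *v x) = w \<bullet> x" for x
    using assms by (simp add: refl_mat_mult_vec inner_diff_right norm_eq_1)
  then have "refl_mat w *v (refl_mat w *v x) = x" for x
    by (simp add: refl_mat_mult_vec[of w "refl_mat w *v x"]) (simp add: refl_mat_mult_vec)
  then show ?thesis
    by (simp add: matrix_eq matrix_vector_mul_assoc[symmetric])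
qed

lemma refl_mat_conj_fixed:
  fixes U :: mat3
  assumes "transpose U = U" "U *v w = w" "norm w = 1"
  shows "refl_mat w ** U ** refl_mat w = U"
proof -
  have "w \<bullet> (U *v x) = w \<bullet> x" for x
    using assms(1,2) by (metis dot_lmul_matrix inner_commute transpose_matrix_vector)
  then have "refl_mat w ** U = U ** refl_mat w"
    using assms(2) by (simp add: matrix_eq matrix_vector_mul_assoc[symmetric] refl_mat_mult_vec
        matrix_vector_mult_diff_distrib matrix_vector_mult_scaleR)
  then show ?thesis
    using refl_mat_squared[OF assms(3)] by (metis matrix_mul_assoc matrix_mul_rid)
qed

lemma refl_mat_mult_orthogonal:
  fixes w e :: vec3
  assumes "norm w = 1" "norm e = 1" "w \<bullet> e = 0"
  shows "refl_mat e ** refl_mat w = refl_mat (cross3 w e)"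
    and "refl_mat w ** refl_mat e = refl_mat (cross3 w e)"
  using assms unfolding norm_eq_1 refl_mat_def
  by (simp_all add: vec_eq_iff forall_3 sum_3 matrix_matrix_mult_def outer_def mat_def inner_vec_def
      cross_components; algebra)+

lemma refl_mat_conj_cross:
  fixes U :: mat3 and w e :: vec3
  assumes "transpose U = U" "U *v w = w" "norm w = 1" "norm e = 1" "w \<bullet> e = 0"
  shows "refl_mat (cross3 w e) ** U ** refl_mat (cross3 w e) = refl_mat e ** U ** refl_mat e"
proof -
  note prod = refl_mat_mult_orthogonal[OF assms(3-5)]
  have "refl_mat (cross3 w e) ** U ** refl_mat (cross3 w e)
      = (refl_mat e ** refl_mat w) ** U ** (refl_mat w ** refl_mat e)"
    by (simp only: prod)
  also have "\<dots> = refl_mat e ** (refl_mat w ** U ** refl_mat w) ** refl_mat e"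
    by (simp add: matrix_mul_assoc)
  finally show ?thesis
    using refl_mat_conj_fixed[OF assms(1-3)] by simp
qed

text \<open>A unit fixed vector \<open>w \<perp> e\<close> of \<open>U\<close> would make \<open>w \<times> e\<close> a second twin axis.\<close>
lemma unique_axis_no_fixed_orthogonal:
  fixes U :: mat3 and w e :: vec3
  assumes "transpose U = U" "norm e = 1"
    and unique: "\<forall>e'. norm e' = 1 \<and> refl_mat e ** U ** refl_mat e = refl_mat e' ** U ** refl_mat e'
                 \<longrightarrow> e' = e \<or> e' = - e"
    and "U *v w = w" "w \<bullet> e = 0"
  shows "w = 0"
proof (rule ccontr)
  assume "w \<noteq> 0"
  define w' where "w' = (1 / norm w) *\<^sub>R w"
  have w': "norm w' = 1" "U *v w' = w'" "w' \<bullet> e = 0"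
    using \<open>w \<noteq> 0\<close> assms(4,5) by (simp_all add: w'_def matrix_vector_mult_scaleR)
  have "(norm (cross3 w' e))\<^sup>2 + (w' \<bullet> e)\<^sup>2 = (norm w' * norm e)\<^sup>2"
    by (rule norm_cross_dot)
  then have "norm (cross3 w' e) = 1"
    using w' assms(2) norm_ge_zero[of "cross3 w' e"] by (auto simp: power2_eq_1_iff)
  then have "cross3 w' e = e \<or> cross3 w' e = - e"
    using unique refl_mat_conj_cross[OF assms(1) w'(2,1) assms(2) w'(3)] by metis
  moreover have "cross3 w' e \<bullet> e = 0"
    by (rule dot_cross_self)
  ultimately show False
    using assms(2) by (auto simp: norm_eq_1)
qed

section \<open>Positive definite matrices and the cofactor conditions\<close>

lemma sym_pos_def_fixed_of_square_fixed:
  fixes U :: "real^'n^'n"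
  assumes "sym_pos_def U" "(U ** U) *v w = w"
  shows "U *v w = w"
proof -
  define z where "z = U *v w - w"
  have "U *v z = - z"
    using assms(2) by (simp add: z_def matrix_vector_mult_diff_distrib matrix_vector_mul_assoc)
  then have "\<not> z \<bullet> (U *v z) > 0" by (simp add: not_less)
  then have "z = 0" using assms(1) unfolding sym_pos_def_def by blast
  then show ?thesis by (simp add: z_def)
qed

lemma sym_pos_def_matrix_inv:
  fixes U :: "real^'n^'n"
  assumes "sym_pos_def U"
  shows "U ** matrix_inv U = mat 1" "matrix_inv U ** U = mat 1"
proof -
  have "\<forall>x. U *v x = 0 \<longrightarrow> x = 0"
    using assms unfolding sym_pos_def_def by force
  then obtain B where "B ** U = mat 1" using matrix_left_invertible_ker by blast
  then have "\<exists>B. U ** B = mat 1 \<and> B ** U = mat 1" using matrix_left_right_inverse by blast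
  then have "U ** matrix_inv U = mat 1 \<and> matrix_inv U ** U = mat 1"
    unfolding matrix_inv_def by (rule someI_ex)
  then show "U ** matrix_inv U = mat 1" "matrix_inv U ** U = mat 1" by auto
qed

lemma middle_eigenvalue_det: "middle_eigenvalue U l \<Longrightarrow> det (U - l *\<^sub>R mat 1) = 0"
  unfolding middle_eigenvalue_def by force

lemma cof_sq_minus_id_fixed:
  fixes U :: mat3
  defines "C \<equiv> cof (U ** U - mat 1)"
  assumes "sym_pos_def U" "det (U - mat 1) = 0"
  shows "U ** C = C" "transpose C = C"
proof -
  define A where "A = U ** U - mat 1"
  have Usym: "transpose U = U" using assms(2) by (simp add: sym_pos_def_def)
  have "A = (U + mat 1) ** (U - mat 1)"
    by (simp add: A_def vec_eq_iff forall_3 sum_3 matrix_matrix_mult_def mat_def algebra_simps)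
  then have "det A = 0" using assms(3) by (simp add: det_mul)
  have "transpose A = A"
    by (simp add: A_def transpose_diff matrix_transpose_mul Usym)
  then show Csym: "transpose C = C"
    by (simp add: C_def A_def[symmetric] cof_transpose[symmetric])
  have "A ** C = 0"
    using matrix_mul_transpose_cof[of A] \<open>det A = 0\<close> Csym by (simp add: C_def A_def)
  then have "A *v (C *v y) = 0" for y
    by (simp add: matrix_vector_mul_assoc)
  then have "(U ** U) *v (C *v y) = C *v y" for y
    by (simp add: A_def matrix_vector_mult_diff_rdistrib)
  then have "U *v (C *v y) = C *v y" for y
    using sym_pos_def_fixed_of_square_fixed[OF assms(2)] by blast
  then show "U ** C = C"
    by (simp add: matrix_eq matrix_vector_mul_assoc[symmetric])
qed

lemma cof_sq_minus_id_inner_ne_0: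
  fixes U :: mat3 and e :: vec3
  defines "C \<equiv> cof (U ** U - mat 1)"
  assumes "sym_pos_def U" "det (U - mat 1) = 0"
    and no_fixed: "\<And>w. U *v w = w \<Longrightarrow> w \<bullet> e = 0 \<Longrightarrow> w = 0"
  shows "e \<bullet> (C *v e) \<noteq> 0"
proof
  assume Ce: "e \<bullet> (C *v e) = 0"
  note UC = cof_sq_minus_id_fixed[OF assms(2,3), folded C_def]
  have fixed: "U *v (C *v y) = C *v y" for y
    using UC(1) by (simp add: matrix_vector_mul_assoc)
  have "C *v e = 0"
    using no_fixed[OF fixed] Ce by (simp add: inner_commute)
  have "C *v y = 0" for y
  proof (rule no_fixed[OF fixed])
    show "(C *v y) \<bullet> e = 0"
      using \<open>C *v e = 0\<close> UC(2) by (metis dot_lmul_matrix inner_commute inner_zero_right transpose_matrix_vector)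
  qed
  then have "C = 0" by (simp add: matrix_eq)
  then obtain p where "p \<noteq> 0" "(U ** U - mat 1) *v p = 0" "p \<bullet> e = 0"
    using cof_eq_0_kernel_orthogonal unfolding C_def by blast
  then show False
    using no_fixed sym_pos_def_fixed_of_square_fixed[OF assms(2), of p]
    by (simp add: matrix_vector_mult_diff_rdistrib)
qed

text \<open>As \<open>U\<close> fixes the columns of \<open>C = cof (U\<^sup>2 - I)\<close>, the second cofactor condition
  reads \<open>(1 / |U\<^sup>-\<^sup>1 e|\<^sup>2 - 1) (e \<bullet> C e) = 0\<close>.\<close>
lemma cof_condition_norm_matrix_inv:
  fixes U :: mat3 and e :: vec3
  defines "a \<equiv> 2 *\<^sub>R ((1 / (norm (matrix_inv U *v e))\<^sup>2) *\<^sub>R (matrix_inv U *v e) - U *v e)"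
  assumes "sym_pos_def U" "det (U - mat 1) = 0"
    and no_fixed: "\<And>w. U *v w = w \<Longrightarrow> w \<bullet> e = 0 \<Longrightarrow> w = 0"
    and CC2: "a \<bullet> ((U ** cof (U ** U - mat 1)) *v e) = 0"
  shows "norm (matrix_inv U *v e) = 1"
proof -
  define C where "C = cof (U ** U - mat 1)"
  define s where "s = (norm (matrix_inv U *v e))\<^sup>2"
  note UC = cof_sq_minus_id_fixed[OF assms(2,3), folded C_def]
  have "C ** U = C"
    using UC by (metis matrix_transpose_mul sym_pos_def_def assms(2))
  then have "C ** matrix_inv U = C"
    using sym_pos_def_matrix_inv[OF assms(2)] by (metis matrix_mul_assoc matrix_mul_rid)
  then have Ca: "C *v a = 2 *\<^sub>R ((1 / s - 1) *\<^sub>R (C *v e))"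
    using \<open>C ** U = C\<close> by (simp add: a_def s_def matrix_vector_mult_diff_distrib matrix_vector_mult_scaleR
        matrix_vector_mul_assoc algebra_simps)
  have "e \<bullet> (C *v a) = a \<bullet> (C *v e)"
    using UC(2) by (metis dot_lmul_matrix inner_commute transpose_matrix_vector)
  also have "\<dots> = 0"
    using CC2 UC(1) by (simp add: C_def)
  finally have "2 * ((1 / s - 1) * (e \<bullet> (C *v e))) = 0"
    unfolding Ca by (simp only: inner_scaleR_right)
  moreover have "e \<bullet> (C *v e) \<noteq> 0"
    using cof_sq_minus_id_inner_ne_0[OF assms(2,3), where e = e] no_fixed by (simp add: C_def)
  ultimately have "1 / s = 1" by simp
  then have "(norm (matrix_inv U *v e))\<^sup>2 = 1" by (simp add: s_def)
  then show ?thesis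
    using norm_ge_zero[of "matrix_inv U *v e"] by (auto simp: power2_eq_1_iff)
qed

lemma exists_fixed_vector_not_parallel:
  fixes U :: mat3 and e :: vec3
  assumes "sym_pos_def U" "det (U - mat 1) = 0" "U *v e \<noteq> e"
    and no_fixed: "\<And>w. U *v w = w \<Longrightarrow> w \<bullet> e = 0 \<Longrightarrow> w = 0"
  obtains x where "U *v x = x" "cross3 x e \<noteq> 0"
proof -
  define x where "x = cof (U ** U - mat 1) *v e"
  have "U *v x = x"
    using cof_sq_minus_id_fixed(1)[OF assms(1,2)] by (simp add: x_def matrix_vector_mul_assoc)
  moreover have "x \<noteq> 0"
    using cof_sq_minus_id_inner_ne_0[OF assms(1,2), where e = e] no_fixed by (auto simp: x_def)
  moreover have "cross3 x e \<noteq> 0"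
  proof
    assume "cross3 x e = 0"
    then have "e = ((x \<bullet> e) / (x \<bullet> x)) *\<^sub>R x" using \<open>x \<noteq> 0\<close> by (rule cross3_eq_0_scaleR)
    then have "U *v e = e"
      using \<open>U *v x = x\<close> by (metis matrix_vector_mult_scaleR)
    with assms(3) show False ..
  qed
  ultimately show thesis using that by blast
qed

lemma twin_vector_image:
  assumes "Q ** U = mat 1 + outer b m" "Q *v u = e" "U *v u = e"
  shows "Q *v (2 *\<^sub>R (u - U *v e)) = (- 2 * (m \<bullet> e)) *\<^sub>R b"
proof -
  have "Q *v (U *v e) = e + (m \<bullet> e) *\<^sub>R b"
    using assms(1) by (simp add: matrix_vector_mul_assoc matrix_vector_mult_add_rdistrib outer_mult_vec)
  then show ?thesis
    using assms(2) by (simp add: matrix_vector_mult_scaleR matrix_vector_mult_diff_distrib algebra_simps)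
qed

lemma rotation_mult_sym_pos_def_ne_id:
  fixes U Q :: mat3
  assumes "sym_pos_def U" "rotation_matrix Q" "Q *v u = e" "U *v u = e" "U *v e \<noteq> e"
  shows "Q ** U \<noteq> mat 1"
proof
  assume "Q ** U = mat 1"
  then have "U = transpose Q"
    using assms(2) by (metis matrix_left_right_inverse orthogonal_matrix_def rotation_matrix_def matrix_mul_assoc
        matrix_mul_lid)
  then have "U *v e = u"
    using assms(2,3) by (metis matrix_vector_mul_assoc matrix_vector_mul_lid orthogonal_matrix_def
        rotation_matrix_def)
  then have "(U ** U) *v e = e"
    using assms(4) by (simp add: matrix_vector_mul_assoc[symmetric])
  then show False
    using sym_pos_def_fixed_of_square_fixed[OF assms(1)] assms(5) by blast
qed

lemma cofactor_conditions_common_rotation: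
  fixes U :: mat3 and e :: vec3
  defines "a \<equiv> 2 *\<^sub>R ((1 / (norm (matrix_inv U *v e))\<^sup>2) *\<^sub>R (matrix_inv U *v e) - U *v e)"
  assumes U_spd: "sym_pos_def U" and e_unit: "norm e = 1" and Ue: "U *v e \<noteq> e"
    and no_fixed: "\<And>w. U *v w = w \<Longrightarrow> w \<bullet> e = 0 \<Longrightarrow> w = 0"
    and CC1: "middle_eigenvalue U 1" and CC2: "a \<bullet> ((U ** cof (U ** U - mat 1)) *v e) = 0"
  obtains Q where "rotation_matrix Q" "\<exists>b m. Q ** U = mat 1 + outer b m" "Q ** U \<noteq> mat 1"
    "\<And>b m. Q ** U = mat 1 + outer b m \<Longrightarrow> Q *v a = (- 2 * (m \<bullet> e)) *\<^sub>R b"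
proof -
  have Usym: "transpose U = U" using U_spd by (simp add: sym_pos_def_def)
  have det1: "det (U - mat 1) = 0"
    using middle_eigenvalue_det[OF CC1] by simp
  define u where "u = matrix_inv U *v e"
  have Uu: "U *v u = e"
    using sym_pos_def_matrix_inv(1)[OF U_spd] by (simp add: u_def matrix_vector_mul_assoc)
  have "norm u = 1"
    using cof_condition_norm_matrix_inv[OF U_spd det1, where e = e] no_fixed CC2 by (simp add: u_def a_def)
  then have a_u: "a = 2 *\<^sub>R (u - U *v e)" and uu: "u \<bullet> u = e \<bullet> e"
    using e_unit by (simp add: a_def u_def[symmetric], simp add: norm_eq_1)
  obtain x where "U *v x = x" "cross3 x e \<noteq> 0"
    using exists_fixed_vector_not_parallel[OF U_spd det1 Ue] no_fixed by blast
  then obtain Q b m where Q: "rotation_matrix Q" "Q *v u = e" "Q ** U = mat 1 + outer b m"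
    using exists_rotation_rank_one[OF Usym Uu uu] by blast
  show thesis
  proof (rule that[OF Q(1)])
    show "\<exists>b m. Q ** U = mat 1 + outer b m" using Q(3) by blast
    show "Q ** U \<noteq> mat 1" using rotation_mult_sym_pos_def_ne_id[OF U_spd Q(1,2) Uu Ue] .
    show "Q *v a = (- 2 * (m' \<bullet> e)) *\<^sub>R b'" if "Q ** U = mat 1 + outer b' m'" for b' m'
      unfolding a_u using twin_vector_image[OF that Q(2) Uu] .
  qed
qed

theorem theorem2:
  fixes U Uhat Rhat :: mat3 and e nI aI :: vec3
    and R :: "nat \<Rightarrow> int \<Rightarrow> mat3" and b m :: "nat \<Rightarrow> int \<Rightarrow> vec3"
  assumes U_spd: "sym_pos_def U"
    and e_unit: "norm e = 1"
    and Uhat_def: "Uhat = refl_mat e ** U ** refl_mat e"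
    and Uhat_ne: "Uhat \<noteq> U"
    and e_unique: "\<forall>e'. norm e' = 1 \<and> Uhat = refl_mat e' ** U ** refl_mat e' \<longrightarrow> e' = e \<or> e' = - e"
    and nI_def: "nI = e"
    and aI_def: "aI = 2 *\<^sub>R ((1 / (norm (matrix_inv U *v e))\<^sup>2) *\<^sub>R (matrix_inv U *v e) - U *v e)"
    and Rhat_rot: "rotation_matrix Rhat"
    and Rhat_eq: "Rhat ** Uhat = U + outer aI nI"
    and aI_nz: "aI \<noteq> 0"
    and CC1: "middle_eigenvalue U 1"
    and CC2: "aI \<bullet> ((U ** cof (U ** U - mat 1)) *v nI) = 0"
    and CC3: "trace (U ** U) - det (U ** U) - (norm aI)\<^sup>2 * (norm nI)\<^sup>2 / 4 - 2 \<ge> 0"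
    and sol: "\<forall>f\<in>{0,1}. \<forall>\<kappa>\<in>{1,-1}. rotation_matrix (R f \<kappa>) \<and>
               R f \<kappa> ** (U + real f *\<^sub>R outer aI nI) = mat 1 + outer (b f \<kappa>) (m f \<kappa>)"
    and sol_distinct: "\<forall>f\<in>{0,1}. (R f 1, outer (b f 1) (m f 1)) \<noteq> (R f (-1), outer (b f (-1)) (m f (-1)))"
    and sol_all: "\<forall>f\<in>{0,1}. \<forall>Q bb mm. rotation_matrix Q \<and>
               Q ** (U + real f *\<^sub>R outer aI nI) = mat 1 + outer bb mm \<longrightarrow>
               (Q, outer bb mm) = (R f 1, outer (b f 1) (m f 1)) \<or>
               (Q, outer bb mm) = (R f (-1), outer (b f (-1)) (m f (-1)))"
  shows "\<exists>\<sigma>\<in>{1,-1}. \<exists>\<sigma>s\<in>{1,-1}. \<exists>\<xi>::real. \<xi> \<noteq> 0 \<and>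
           R 1 \<sigma>s = R 0 \<sigma> \<and> b 1 \<sigma>s = \<xi> *\<^sub>R b 0 \<sigma> \<and>
           R 0 \<sigma> ** U = mat 1 + outer (b 0 \<sigma>) (m 0 \<sigma>) \<and>
           R 0 \<sigma> ** (U + outer aI nI) = mat 1 + outer (b 0 \<sigma>) (\<xi> *\<^sub>R m 1 \<sigma>s) \<and>
           (\<forall>f::real. 0 \<le> f \<and> f \<le> 1 \<longrightarrow>
              R 0 \<sigma> ** (U + f *\<^sub>R outer aI nI) =
                mat 1 + outer (b 0 \<sigma>) ((f * \<xi>) *\<^sub>R m 1 \<sigma>s + (1 - f) *\<^sub>R m 0 \<sigma>)) \<and>
           R 0 \<sigma> ** U - mat 1 = outer (b 0 \<sigma>) (m 0 \<sigma>) \<and>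
           R 0 \<sigma> ** Rhat ** Uhat - mat 1 = outer (b 0 \<sigma>) (\<xi> *\<^sub>R m 1 \<sigma>s) \<and>
           R 0 \<sigma> ** Rhat ** Uhat - R 0 \<sigma> ** U = outer (R 0 \<sigma> *v aI) nI \<and>
           (\<exists>c::real. c \<noteq> 0 \<and> c *\<^sub>R nI = \<xi> *\<^sub>R m 1 \<sigma>s - m 0 \<sigma>) \<and>
           (\<exists>p::vec3. p \<noteq> 0 \<and> p \<bullet> m 0 \<sigma> = 0 \<and> p \<bullet> m 1 \<sigma>s = 0 \<and> p \<bullet> nI = 0)"
proof -
  have Usym: "transpose U = U" using U_spd by (simp add: sym_pos_def_def)
  have no_fixed: "\<And>w. U *v w = w \<Longrightarrow> w \<bullet> e = 0 \<Longrightarrow> w = 0"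
    using unique_axis_no_fixed_orthogonal[OF Usym e_unit] e_unique Uhat_def by blast
  have Ue: "U *v e \<noteq> e"
    using refl_mat_conj_fixed[OF Usym _ e_unit] Uhat_def Uhat_ne by blast
  obtain Q where Q: "rotation_matrix Q" "\<exists>b m. Q ** U = mat 1 + outer b m" "Q ** U \<noteq> mat 1"
    and Q_aI: "\<And>b m. Q ** U = mat 1 + outer b m \<Longrightarrow> Q *v aI = (- 2 * (m \<bullet> e)) *\<^sub>R b"
    using cofactor_conditions_common_rotation[OF U_spd e_unit Ue no_fixed CC1] CC2
    unfolding aI_def nI_def by blast
  then have "R 0 1 = Q \<or> R 0 (-1) = Q"
    using sol_all[rule_format, of 0 Q] by auto
  then obtain \<sigma> where \<sigma>: "\<sigma> \<in> {1, -1}" "R 0 \<sigma> = Q" by blast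
  define b0 m0 c where "b0 = b 0 \<sigma>" "m0 = m 0 \<sigma>" "c = - 2 * (m0 \<bullet> e)"
  have QU: "Q ** U = mat 1 + outer b0 m0"
    using sol \<sigma> by (force simp: b0_m0_c_def)
  have QaI: "Q *v aI = c *\<^sub>R b0"
    using Q_aI[OF QU] by (simp add: b0_m0_c_def)
  have "b0 \<noteq> 0" "m0 \<noteq> 0"
    using Q(3) QU by (auto simp: outer_eq_0_iff)
  have "c \<noteq> 0"
    using QaI aI_nz Q(1) by (metis matrix_vector_mul_assoc matrix_vector_mul_lid matrix_vector_mult_0_right
        orthogonal_matrix_def rotation_matrix_def scale_zero_left)
  have seg: "Q ** (U + f *\<^sub>R outer aI nI) = mat 1 + outer b0 (m0 + (f * c) *\<^sub>R e)" for f
    using rank_one_segment[OF QU QaI] nI_def by simp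
  define m1 where "m1 = m0 + c *\<^sub>R e"
  have "m1 \<bullet> e \<noteq> 0"
    using \<open>c \<noteq> 0\<close> e_unit by (simp add: m1_def b0_m0_c_def inner_add_left inner_diff_left norm_eq_1)
  then have "m1 \<noteq> 0" by auto
  have "Q ** (U + real 1 *\<^sub>R outer aI nI) = mat 1 + outer b0 m1"
    using seg[of 1] by (simp add: m1_def)
  then have "(R 1 1 = Q \<and> outer b0 m1 = outer (b 1 1) (m 1 1)) \<or>
             (R 1 (-1) = Q \<and> outer b0 m1 = outer (b 1 (-1)) (m 1 (-1)))"
    using sol_all[rule_format, of 1 Q b0 m1] Q(1) by auto
  then obtain \<sigma>s where \<sigma>s: "\<sigma>s \<in> {1, -1}" "R 1 \<sigma>s = Q" "outer b0 m1 = outer (b 1 \<sigma>s) (m 1 \<sigma>s)"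
    by blast
  obtain \<xi> where \<xi>: "\<xi> \<noteq> 0" "b 1 \<sigma>s = \<xi> *\<^sub>R b0" "m1 = \<xi> *\<^sub>R m 1 \<sigma>s"
    using outer_eq_outerE[OF \<sigma>s(3)[symmetric] \<open>b0 \<noteq> 0\<close> \<open>m1 \<noteq> 0\<close>] by blast
  have m1_eq: "\<xi> *\<^sub>R m 1 \<sigma>s = m0 + c *\<^sub>R e"
    using \<xi>(3) by (simp add: m1_def)
  then have normal: "c *\<^sub>R nI = \<xi> *\<^sub>R m 1 \<sigma>s - m0"
    by (simp add: nI_def)
  have path: "Q ** (U + f *\<^sub>R outer aI nI) = mat 1 + outer b0 ((f * \<xi>) *\<^sub>R m 1 \<sigma>s + (1 - f) *\<^sub>R m0)"
    for f
  proof -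
    have "(f * \<xi>) *\<^sub>R m 1 \<sigma>s + (1 - f) *\<^sub>R m0 = f *\<^sub>R (\<xi> *\<^sub>R m 1 \<sigma>s) + (1 - f) *\<^sub>R m0"
      by simp
    also have "\<dots> = m0 + (f * c) *\<^sub>R e"
      unfolding m1_eq by (simp add: algebra_simps)
    finally show ?thesis using seg by simp
  qed
  have RhatUhat: "Q ** Rhat ** Uhat = Q ** (U + outer aI nI)"
    by (simp add: Rhat_eq flip: matrix_mul_assoc)
  show ?thesis
  proof (rule bexI[OF _ \<sigma>(1)], rule bexI[OF _ \<sigma>s(1)], rule exI[of _ \<xi>], intro conjI)
    show "\<forall>f. 0 \<le> f \<and> f \<le> 1 \<longrightarrow> R 0 \<sigma> ** (U + f *\<^sub>R outer aI nI) =
          mat 1 + outer (b 0 \<sigma>) ((f * \<xi>) *\<^sub>R m 1 \<sigma>s + (1 - f) *\<^sub>R m 0 \<sigma>)"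
      using path \<sigma>(2) by (simp add: b0_m0_c_def)
    show "\<exists>c. c \<noteq> 0 \<and> c *\<^sub>R nI = \<xi> *\<^sub>R m 1 \<sigma>s - m 0 \<sigma>"
      using \<open>c \<noteq> 0\<close> normal by (auto simp: b0_m0_c_def(2))
    show "\<exists>p. p \<noteq> 0 \<and> p \<bullet> m 0 \<sigma> = 0 \<and> p \<bullet> m 1 \<sigma>s = 0 \<and> p \<bullet> nI = 0"
      using orthogonal_to_combination_exists[OF \<xi>(1) normal] by (metis b0_m0_c_def(2))
  qed (use \<xi> \<sigma> \<sigma>s QU path[of 1] RhatUhat in \<open>simp_all add: b0_m0_c_def matrix_add_ldistrib matrix_mul_outer\<close>)
qed

end
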